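(* Let $w$ be a graphon and $\kappa\in[0,1]$. Then: (1) $|K_{\kappa}(w)|=\lim_{n\to\infty}|K^{n}_{\kappa}(w)|$. (2) If $|K_{\kappa}(w)|>0$, then $|K_{\kappa}(w)|\ge\kappa$. (3) If $|K_{\kappa}(w)|=0$, then $K_{\kappa}(w)=\emptyset$; moreover in this case $K^{n}_{\kappa}(w)=\emptyset$ for some finite $n$. (4) The map $\kappa\mapsto|K_{\kappa}(w)|$ is upper semi-continuous; more precisely, for $\kappa\in(0,1]$, $|K_{\kappa}(w)|=\lim_{\kappa'\to\kappa,\,\kappa'<\kappa}|K_{\kappa'}(w)|=\limsup_{\kappa'\to\kappa}|K_{\kappa'}(w)|$.
   Context: A graphon is a Lebesgue-measurable symmetric function $w:[0,1]^2\to[0,1]$. For a measurable $K\subseteq[0,1]$ and $x\in[0,1]$ let $d_w^K(x)=\int_K w(x,y)\,\mathrm{d}y$ and $d_w(x)=d_w^{[0,1]}(x)$. For $\kappa\in[0,1]$ define recursively $K^{1}_{\kappa}(w)=\{x\in[0,1]: d_w(x)\ge\kappa\}$ and $K^{n+1}_{\kappa}(w)=\{x\in K^{n}_{\kappa}(w): d_w^{K^{n}_{\kappa}(w)}(x)\ge\kappa\}$, and let the $\kappa$-core be $K_{\kappa}(w)=\bigcap_{n\ge1}K^{n}_{\kappa}(w)$. $|A|$ denotes Lebesgue measure. *)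

theory Defs
  imports "HOL-Analysis.Analysis"
begin

text \<open>A graphon: Lebesgue-measurable symmetric function on the unit square with values in [0,1].
  Functions are total on real, only their values on the unit square matter.\<close>
definition graphon :: "(real \<Rightarrow> real \<Rightarrow> real) \<Rightarrow> bool" where
  "graphon w \<longleftrightarrow>
     (\<lambda>(x, y). w x y) \<in> borel_measurable (lebesgue_on ({0..1} \<times> {0..1})) \<and>
     (\<forall>x\<in>{0..1}. \<forall>y\<in>{0..1}. w x y = w y x \<and> 0 \<le> w x y \<and> w x y \<le> 1)"

definition gdeg :: "(real \<Rightarrow> real \<Rightarrow> real) \<Rightarrow> real set \<Rightarrow> real \<Rightarrow> real" where
  "gdeg w K x = (LINT y:K|lebesgue. w x y)"

text \<open>Iterated cores: kcore_iter w k n is K^n_k(w) for n \<ge> 1; index 0 is [0,1],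
  so that K^1 = {x in [0,1]. d_w(x) \<ge> k} with d_w = d_w^[0,1].\<close>
fun kcore_iter :: "(real \<Rightarrow> real \<Rightarrow> real) \<Rightarrow> real \<Rightarrow> nat \<Rightarrow> real set" where
  "kcore_iter w k 0 = {0..1}"
| "kcore_iter w k (Suc n) = {x \<in> kcore_iter w k n. gdeg w (kcore_iter w k n) x \<ge> k}"

definition kcore :: "(real \<Rightarrow> real \<Rightarrow> real) \<Rightarrow> real \<Rightarrow> real set" where
  "kcore w k = (\<Inter>n\<in>{1..}. kcore_iter w k n)"

end

theory Submission
  imports Defs
begin

text \<open>Choose a Borel version g of w and a null set N such that for x outside N the sections
  w(x,-) and g(x,-) agree almost everywhere on [0,1]. Off N the degree d_w^K(x) is the integral
  of g(x,-) over K, which is measurable in x, monotone in K up to null sets and continuous along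
  decreasing sequences of sets. Hence all iterated cores are measurable, and (1) is continuity of
  measure from above. A point of the core has degree at least \<kappa> into every K^n, so |K^n| \<ge> \<kappa>,
  which gives (2); once |K^n| < \<kappa> the next iterate is empty, which gives (3).
  Up to null sets, K_\<kappa> decreases in \<kappa> and contains every set L in which almost every point
  has degree at least \<kappa> into L. For \<kappa>_m increasing to \<kappa>, dominated convergence shows that the
  intersection of the K_\<kappa>_m has this property, so |K_\<kappa>_m| tends to |K_\<kappa>|. Left continuity
  together with monotonicity makes \<kappa> \<mapsto> |K_\<kappa>| upper semicontinuous, which gives (4).\<close>

lemma sigma_finite_lebesgue: "sigma_finite_measure (lebesgue :: real measure)"
proof
  have "\<exists>n::nat. - real n \<le> x \<and> x \<le> real n" for x :: real
    using real_arch_simple[of "\<bar>x\<bar>"] by (metis abs_le_iff minus_le_iff)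
  then show "\<exists>A. countable A \<and> A \<subseteq> sets lebesgue \<and> \<Union> A = space (lebesgue :: real measure)
      \<and> (\<forall>a\<in>A. emeasure lebesgue a \<noteq> \<infinity>)"
    by (intro exI[of _ "range (\<lambda>n::nat. {- real n..real n})"]) auto
qed

lemma lmeasurable_subset_unit_interval:
  "A \<in> sets lebesgue \<Longrightarrow> A \<subseteq> {0..1::real} \<Longrightarrow> A \<in> lmeasurable"
  by (rule fmeasurableI2[of "{0..1}"]) auto

lemma Limsup_filter_mono: "F \<le> G \<Longrightarrow> Limsup F f \<le> Limsup G f"
  unfolding Limsup_def by (rule INF_mono) (auto simp: le_filter_def)

lemma gdeg_nonneg:
  assumes "\<And>y. y \<in> A \<Longrightarrow> 0 \<le> w x y"
  shows "0 \<le> gdeg w A x"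
  unfolding gdeg_def set_lebesgue_integral_def
  using assms by (intro integral_nonneg_AE AE_I2) (auto simp: indicator_def)

lemma gdeg_le_measure:
  assumes A: "A \<in> lmeasurable" and le_1: "\<And>y. y \<in> A \<Longrightarrow> w x y \<le> 1"
  shows "gdeg w A x \<le> measure lebesgue A"
proof (cases "set_integrable lebesgue A (w x)")
  case True
  have "gdeg w A x \<le> (LINT y:A|lebesgue. 1)"
    unfolding gdeg_def using True A le_1
    by (intro set_integral_mono) (auto simp: set_integrable_def lmeasurable_iff_integrable)
  then show ?thesis using A by (simp add: set_lebesgue_integral_def)
next
  case False
  then show ?thesis
    unfolding gdeg_def set_lebesgue_integral_def set_integrable_def
    by (simp add: not_integrable_integral_eq)
qed

lemma kcore_iter_subset: "kcore_iter w c n \<subseteq> {0..1}"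
  by (induction n) auto

lemma decseq_kcore_iter: "decseq (kcore_iter w c)"
  by (rule decseq_SucI) auto

lemma kcore_eq_INT: "kcore w c = (\<Inter>n. kcore_iter w c n)"
  unfolding kcore_def
proof (intro equalityI subsetI)
  fix x assume "x \<in> (\<Inter>n\<in>{1..}. kcore_iter w c n)"
  then have "x \<in> kcore_iter w c (Suc n)" for n by (simp del: kcore_iter.simps)
  then show "x \<in> (\<Inter>n. kcore_iter w c n)" by auto
qed auto

lemma kcore_subset: "kcore w c \<subseteq> {0..1}"
  unfolding kcore_eq_INT using kcore_iter_subset by blast

locale unit_kernel =
  fixes g :: "real \<Rightarrow> real \<Rightarrow> real"
  assumes borel_measurable_kernel: "(\<lambda>(x, y). g x y) \<in> borel_measurable (lborel \<Otimes>\<^sub>M lborel)"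
    and kernel_nonneg: "0 \<le> g x y"
    and kernel_le_1: "g x y \<le> 1"
begin

lemma borel_measurable_section: "g x \<in> borel_measurable lebesgue"
proof -
  have "(\<lambda>y. (\<lambda>(x, y). g x y) (x, y)) \<in> borel_measurable lborel"
    by (rule measurable_compose[OF measurable_Pair1' borel_measurable_kernel]) simp
  then show ?thesis by (intro measurable_completion) simp
qed

lemma set_integrable_section:
  assumes "A \<in> lmeasurable"
  shows "set_integrable lebesgue A (g x)"
  unfolding set_integrable_def
proof (rule Bochner_Integration.integrable_bound)
  show "integrable lebesgue (indicator A :: real \<Rightarrow> real)"
    using assms lmeasurable_iff_integrable by blast
  show "AE y in lebesgue. norm (indicator A y *\<^sub>R g x y) \<le> norm (indicator A y :: real)"
    using kernel_nonneg kernel_le_1 by (intro AE_I2) (auto simp: indicator_def)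
qed (use assms borel_measurable_section in auto)

lemma borel_measurable_gdeg:
  assumes A: "A \<in> sets lebesgue"
  shows "gdeg g A \<in> borel_measurable lebesgue"
proof -
  interpret lebesgue: sigma_finite_measure "lebesgue :: real measure"
    by (rule sigma_finite_lebesgue)
  have id: "(\<lambda>x. x) \<in> lebesgue \<rightarrow>\<^sub>M (lborel :: real measure)"
    by (rule measurable_completion) simp
  have "(\<lambda>p :: real \<times> real. (fst p, snd p)) \<in> lebesgue \<Otimes>\<^sub>M lebesgue \<rightarrow>\<^sub>M lborel \<Otimes>\<^sub>M lborel"
    by (intro measurable_Pair measurable_compose[OF measurable_fst id]
        measurable_compose[OF measurable_snd id])
  from measurable_compose[OF this borel_measurable_kernel]
  have "(\<lambda>p. g (fst p) (snd p)) \<in> borel_measurable (lebesgue \<Otimes>\<^sub>M lebesgue)"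
    by (simp add: case_prod_beta)
  moreover have "(\<lambda>p. indicator A (snd p) :: real) \<in> borel_measurable (lebesgue \<Otimes>\<^sub>M lebesgue)"
    using A by (intro measurable_compose[OF measurable_snd]) auto
  ultimately have "(\<lambda>(x, y). indicator A y *\<^sub>R g x y) \<in> borel_measurable (lebesgue \<Otimes>\<^sub>M lebesgue)"
    unfolding case_prod_beta by (intro borel_measurable_scaleR)
  then show ?thesis
    unfolding gdeg_def set_lebesgue_integral_def by (rule lebesgue.borel_measurable_lebesgue_integral)
qed

lemma gdeg_mono_AE:
  assumes "A \<in> lmeasurable" "B \<in> lmeasurable" "A - B \<in> null_sets lebesgue"
  shows "gdeg g A x \<le> gdeg g B x"
  unfolding gdeg_def set_lebesgue_integral_def
  using assms set_integrable_section AE_not_in[OF assms(3)]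
  by (intro integral_mono_AE)
    (auto simp: set_integrable_def indicator_def kernel_nonneg elim!: eventually_mono)

lemma gdeg_Diff_null_set:
  assumes "A \<in> sets lebesgue" "N \<in> null_sets lebesgue"
  shows "gdeg g (A - N) x = gdeg g A x"
  unfolding gdeg_def using assms AE_not_in[OF assms(2)] borel_measurable_section
  by (intro set_integral_cong_set) (auto simp: set_borel_measurable_def elim!: eventually_mono)

lemma tendsto_gdeg_decseq:
  assumes "decseq A" "\<And>m. A m \<in> sets lebesgue" "A 0 \<in> lmeasurable"
  shows "(\<lambda>m. gdeg g (A m) x) \<longlonglongrightarrow> gdeg g (\<Inter>m. A m) x"
  unfolding gdeg_def set_lebesgue_integral_def
proof (rule integral_dominated_convergence[where w = "indicator (A 0)"])
  show "AE y in lebesgue.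
      (\<lambda>m. indicator (A m) y *\<^sub>R g x y) \<longlonglongrightarrow> indicator (\<Inter>m. A m) y *\<^sub>R g x y"
    using LIMSEQ_indicator_decseq[OF assms(1)] by (intro AE_I2 tendsto_scaleR) auto
  show "AE y in lebesgue. norm (indicator (A m) y *\<^sub>R g x y) \<le> indicator (A 0) y" for m
    using decseqD[OF assms(1), of 0 m] kernel_nonneg kernel_le_1
    by (intro AE_I2) (auto simp: indicator_def)
qed (use assms borel_measurable_section lmeasurable_iff_integrable in auto)

end

text \<open>The sections w(x,-) of a graphon need not be measurable for all x, so degrees are computed
  with a Borel version g of w, which may disagree with w on the rows in the null set N.\<close>

locale graphon_version = unit_kernel g for g +
  fixes w :: "real \<Rightarrow> real \<Rightarrow> real" and N :: "real set"
  assumes graphon_range: "x \<in> {0..1} \<Longrightarrow> y \<in> {0..1} \<Longrightarrow> 0 \<le> w x y \<and> w x y \<le> 1"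
    and null_exceptions: "N \<in> null_sets lebesgue"
    and AE_section_eq:
      "x \<in> {0..1} \<Longrightarrow> x \<notin> N \<Longrightarrow> AE y in lebesgue. y \<in> {0..1} \<longrightarrow> w x y = g x y"
begin

lemma gdeg_eq_version:
  assumes A: "A \<in> sets lebesgue" "A \<subseteq> {0..1}" and x: "x \<in> {0..1}" "x \<notin> N"
  shows "gdeg w A x = gdeg g A x"
proof -
  have ae: "AE y in lebesgue. indicator A y *\<^sub>R g x y = indicator A y *\<^sub>R w x y"
    using AE_section_eq[OF x] by eventually_elim (use A in \<open>auto simp: indicator_def\<close>)
  have g_meas: "(\<lambda>y. indicator A y *\<^sub>R g x y) \<in> borel_measurable lebesgue"
    using A borel_measurable_section by measurable
  show ?thesis
    unfolding gdeg_def set_lebesgue_integral_def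
    by (rule integral_cong_AE[OF borel_measurable_AE[OF g_meas ae] g_meas])
      (use ae in \<open>auto elim: eventually_mono\<close>)
qed

lemma null_sets_subset_exceptions: "A \<subseteq> N \<Longrightarrow> A \<in> null_sets lebesgue"
  using null_exceptions null_sets_completion_subset by blast

lemma sets_kcore_iter: "kcore_iter w c n \<in> sets lebesgue"
proof (induction n)
  case (Suc n)
  let ?A = "kcore_iter w c n" and ?B = "kcore_iter w c (Suc n)"
  have [measurable]: "?A \<in> sets lebesgue" "gdeg g ?A \<in> borel_measurable lebesgue"
    using Suc borel_measurable_gdeg by auto
  have "?B - N = (?A \<inter> {x \<in> space lebesgue. c \<le> gdeg g ?A x}) - N"
    using gdeg_eq_version[OF Suc kcore_iter_subset] kcore_iter_subset[of w c n] by auto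
  also have "\<dots> \<in> sets lebesgue"
    using null_exceptions by (measurable, auto)
  finally have "(?B - N) \<union> (?B \<inter> N) \<in> sets lebesgue"
    using null_sets_subset_exceptions[of "?B \<inter> N"] by blast
  then show ?case by (simp add: Un_Diff_Int)
qed simp

lemma kcore_iter_lmeasurable: "kcore_iter w c n \<in> lmeasurable"
  using sets_kcore_iter kcore_iter_subset by (rule lmeasurable_subset_unit_interval)

lemma sets_kcore: "kcore w c \<in> sets lebesgue"
  unfolding kcore_eq_INT using sets_kcore_iter by blast

lemma kcore_lmeasurable: "kcore w c \<in> lmeasurable"
  using sets_kcore kcore_subset by (rule lmeasurable_subset_unit_interval)

lemma measure_kcore_iter_tendsto:
  "(\<lambda>n. measure lebesgue (kcore_iter w c n)) \<longlonglongrightarrow> measure lebesgue (kcore w c)"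
  unfolding kcore_eq_INT
  using sets_kcore_iter decseq_kcore_iter fmeasurableD2[OF kcore_iter_lmeasurable]
  by (intro Lim_measure_decseq) auto

lemma kcore_iter_nonpos: "c \<le> 0 \<Longrightarrow> kcore_iter w c n = {0..1}"
proof (induction n)
  case (Suc n)
  have "c \<le> gdeg w {0..1} x" if "x \<in> {0..1}" for x
    using gdeg_nonneg[of "{0..1}" w x] graphon_range that Suc.prems by force
  then show ?case using Suc by auto
qed simp

lemma kcore_nonpos: "c \<le> 0 \<Longrightarrow> kcore w c = {0..1}"
  unfolding kcore_eq_INT using kcore_iter_nonpos by simp

lemma kcore_iter_Suc_eq_empty:
  assumes "measure lebesgue (kcore_iter w c n) < c"
  shows "kcore_iter w c (Suc n) = {}"
proof -
  have "gdeg w (kcore_iter w c n) x \<le> measure lebesgue (kcore_iter w c n)"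
    if "x \<in> kcore_iter w c n" for x
    using that kcore_iter_subset graphon_range by (intro gdeg_le_measure kcore_iter_lmeasurable) blast
  then show ?thesis using assms by fastforce
qed

lemma le_measure_kcore:
  assumes "kcore w c \<noteq> {}"
  shows "c \<le> measure lebesgue (kcore w c)"
proof (rule LIMSEQ_le_const[OF measure_kcore_iter_tendsto], intro exI allI impI)
  fix n
  have "kcore_iter w c (Suc n) \<noteq> {}"
    using assms unfolding kcore_eq_INT by blast
  then show "c \<le> measure lebesgue (kcore_iter w c n)"
    using kcore_iter_Suc_eq_empty by fastforce
qed

lemma kcore_iter_eventually_empty:
  assumes "measure lebesgue (kcore w c) < c"
  shows "\<exists>n. kcore_iter w c (Suc n) = {}"
proof -
  have "eventually (\<lambda>n. measure lebesgue (kcore_iter w c n) < c) sequentially"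
    using measure_kcore_iter_tendsto assms by (rule order_tendstoD)
  then obtain n where "measure lebesgue (kcore_iter w c n) < c"
    by (auto simp: eventually_sequentially)
  then show ?thesis
    using kcore_iter_Suc_eq_empty by blast
qed

lemma measure_kcore_eq_0_imp_empty:
  assumes null: "measure lebesgue (kcore w c) = 0"
  shows "kcore w c = {}" and "\<exists>n\<ge>1. kcore_iter w c n = {}"
proof -
  have "0 < c"
    using kcore_nonpos[of c] null by (cases "c \<le> 0") simp_all
  then show "kcore w c = {}"
    using le_measure_kcore null by fastforce
  from \<open>0 < c\<close> have "measure lebesgue (kcore w c) < c"
    using null by simp
  then obtain n where "kcore_iter w c (Suc n) = {}"
    using kcore_iter_eventually_empty by blast
  then show "\<exists>n\<ge>1. kcore_iter w c n = {}"
    by (intro exI[of _ "Suc n"]) simp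
qed

lemma kcore_iter_SucI:
  assumes x: "x \<in> kcore_iter w c n" "x \<notin> N"
    and B: "B \<in> lmeasurable" "B - kcore_iter w c n \<in> null_sets lebesgue"
    and deg: "c \<le> gdeg g B x"
  shows "x \<in> kcore_iter w c (Suc n)"
proof -
  have "c \<le> gdeg g (kcore_iter w c n) x"
    using deg gdeg_mono_AE[OF B(1) kcore_iter_lmeasurable B(2), of x] by linarith
  also have "\<dots> = gdeg w (kcore_iter w c n) x"
    using x kcore_iter_subset[of w c n] by (intro gdeg_eq_version[symmetric] sets_kcore_iter) auto
  finally show ?thesis using x by simp
qed

lemma kcore_iter_antimono:
  assumes "c \<le> c'"
  shows "kcore_iter w c' n - N \<subseteq> kcore_iter w c n"
proof (induction n)
  case (Suc n)
  show ?case
  proof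
    fix x assume x: "x \<in> kcore_iter w c' (Suc n) - N"
    have "c \<le> gdeg w (kcore_iter w c' n) x"
      using x assms by auto
    also have "\<dots> = gdeg g (kcore_iter w c' n) x"
      using x kcore_iter_subset[of w c' n] by (intro gdeg_eq_version sets_kcore_iter) auto
    finally show "x \<in> kcore_iter w c (Suc n)"
      using Suc x by (intro kcore_iter_SucI[of x _ _ "kcore_iter w c' n"] kcore_iter_lmeasurable
          null_sets_subset_exceptions) auto
  qed
qed simp

lemma kcore_antimono: "c \<le> c' \<Longrightarrow> kcore w c' - N \<subseteq> kcore w c"
  unfolding kcore_eq_INT using kcore_iter_antimono by blast

lemma measure_kcore_antimono:
  assumes "c \<le> c'"
  shows "measure lebesgue (kcore w c') \<le> measure lebesgue (kcore w c)"
proof -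
  have "measure lebesgue (kcore w c') = measure lebesgue (kcore w c' - N)"
    using measure_Diff_null_set[OF sets_kcore null_exceptions] by simp
  also have "\<dots> \<le> measure lebesgue (kcore w c)"
    using kcore_antimono[OF assms] sets_kcore null_exceptions kcore_lmeasurable
    by (intro measure_mono_fmeasurable) auto
  finally show ?thesis .
qed

lemma le_gdeg_kcore:
  assumes x: "x \<in> kcore w c" "x \<notin> N"
  shows "c \<le> gdeg g (kcore w c) x"
proof (rule LIMSEQ_le_const)
  show "(\<lambda>n. gdeg g (kcore_iter w c n) x) \<longlonglongrightarrow> gdeg g (kcore w c) x"
    unfolding kcore_eq_INT using decseq_kcore_iter sets_kcore_iter kcore_iter_lmeasurable
    by (rule tendsto_gdeg_decseq)
  have "c \<le> gdeg g (kcore_iter w c n) x" for n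
  proof -
    have "x \<in> kcore_iter w c (Suc n)" "x \<in> {0..1}"
      using x kcore_subset unfolding kcore_eq_INT by blast+
    then show ?thesis
      using gdeg_eq_version[OF sets_kcore_iter kcore_iter_subset _ x(2)] by simp
  qed
  then show "\<exists>M. \<forall>n\<ge>M. c \<le> gdeg g (kcore_iter w c n) x" by blast
qed

lemma measure_le_measure_kcore:
  assumes L: "L \<in> sets lebesgue" "L \<subseteq> {0..1}"
    and deg: "\<And>x. x \<in> L \<Longrightarrow> x \<notin> N \<Longrightarrow> c \<le> gdeg g L x"
  shows "measure lebesgue L \<le> measure lebesgue (kcore w c)"
proof -
  have "L - N \<subseteq> kcore_iter w c n" for n
  proof (induction n)
    case (Suc n)
    show ?case
    proof
      fix x assume x: "x \<in> L - N"
      show "x \<in> kcore_iter w c (Suc n)"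
      proof (rule kcore_iter_SucI)
        show "x \<in> kcore_iter w c n" "x \<notin> N"
          using Suc x by auto
        show "L \<in> lmeasurable"
          using L by (rule lmeasurable_subset_unit_interval)
        show "L - kcore_iter w c n \<in> null_sets lebesgue"
          using Suc by (intro null_sets_subset_exceptions) blast
        show "c \<le> gdeg g L x"
          using deg x by blast
      qed
    qed
  qed (use L in auto)
  then have "L - N \<subseteq> kcore w c"
    unfolding kcore_eq_INT by blast
  then have "measure lebesgue (L - N) \<le> measure lebesgue (kcore w c)"
    using L(1) null_exceptions kcore_lmeasurable by (intro measure_mono_fmeasurable) auto
  then show ?thesis
    using measure_Diff_null_set[OF L(1) null_exceptions] by simp
qed

lemma measure_kcore_tendsto_incseq:
  assumes c: "incseq c" "c \<longlonglongrightarrow> \<kappa>"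
  shows "(\<lambda>m. measure lebesgue (kcore w (c m))) \<longlonglongrightarrow> measure lebesgue (kcore w \<kappa>)"
proof -
  \<comment> \<open>Removing N makes the cores genuinely decreasing.\<close>
  define A where "A m = kcore w (c m) - N" for m
  define L where "L = (\<Inter>m. A m)"
  have A_sets: "A m \<in> sets lebesgue" for m
    unfolding A_def using sets_kcore null_exceptions by auto
  have A_lmeasurable: "A m \<in> lmeasurable" for m
    using A_sets kcore_subset unfolding A_def by (blast intro: lmeasurable_subset_unit_interval)
  have L_sets: "L \<in> sets lebesgue"
    unfolding L_def using A_sets by auto
  have L_subset: "L \<subseteq> {0..1}"
    unfolding L_def A_def using kcore_subset by blast
  have "decseq A"
    unfolding A_def decseq_def using kcore_antimono c(1) by (auto simp: incseq_def)
  have measure_A: "measure lebesgue (A m) = measure lebesgue (kcore w (c m))" for m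
    unfolding A_def using measure_Diff_null_set[OF sets_kcore null_exceptions] .
  have lim: "(\<lambda>m. measure lebesgue (A m)) \<longlonglongrightarrow> measure lebesgue L"
    unfolding L_def using A_sets \<open>decseq A\<close> fmeasurableD2[OF A_lmeasurable]
    by (intro Lim_measure_decseq) auto
  have deg_L: "\<kappa> \<le> gdeg g L x" if x: "x \<in> L" "x \<notin> N" for x
  proof (rule LIMSEQ_le[OF c(2)])
    show "(\<lambda>m. gdeg g (A m) x) \<longlonglongrightarrow> gdeg g L x"
      unfolding L_def using \<open>decseq A\<close> A_sets A_lmeasurable by (rule tendsto_gdeg_decseq)
    have "c m \<le> gdeg g (A m) x" for m
      using x le_gdeg_kcore[of x "c m"] gdeg_Diff_null_set[OF sets_kcore null_exceptions]
      unfolding L_def A_def by auto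
    then show "\<exists>M. \<forall>m\<ge>M. c m \<le> gdeg g (A m) x" by blast
  qed
  have "measure lebesgue (kcore w \<kappa>) \<le> measure lebesgue L"
    using measure_kcore_antimono[OF incseq_le[OF c]]
    by (intro LIMSEQ_le_const[OF lim]) (auto simp: measure_A)
  moreover have "measure lebesgue L \<le> measure lebesgue (kcore w \<kappa>)"
    using L_sets L_subset deg_L by (rule measure_le_measure_kcore)
  ultimately show ?thesis
    using lim by (simp add: measure_A)
qed

lemma measure_kcore_tendsto_left:
  "((\<lambda>k. measure lebesgue (kcore w k)) \<longlongrightarrow> measure lebesgue (kcore w \<kappa>)) (at_left \<kappa>)"
  by (rule tendsto_at_left_sequentially[of "\<kappa> - 1"]) (auto intro: measure_kcore_tendsto_incseq)

lemma measure_kcore_eventually_less: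
  assumes "measure lebesgue (kcore w \<kappa>) < a"
  shows "eventually (\<lambda>k. measure lebesgue (kcore w k) < a) (at \<kappa> within S)"
proof -
  have "eventually (\<lambda>k. measure lebesgue (kcore w k) < a) (at_left \<kappa>)"
    using measure_kcore_tendsto_left assms by (rule order_tendstoD)
  moreover have "eventually (\<lambda>k. measure lebesgue (kcore w k) < a) (at_right \<kappa>)"
    using eventually_at_right_less
  proof (rule eventually_mono)
    fix k assume "\<kappa> < k"
    then show "measure lebesgue (kcore w k) < a"
      using measure_kcore_antimono[of \<kappa> k] assms by simp
  qed
  ultimately have "eventually (\<lambda>k. measure lebesgue (kcore w k) < a) (at \<kappa>)"
    by (subst at_eq_sup_left_right) (simp only: eventually_sup)
  then show ?thesis
    using filter_leD[OF at_le[of S UNIV]] by blast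
qed

lemma Limsup_measure_kcore_le:
  "Limsup (at \<kappa> within S) (\<lambda>k. ereal (measure lebesgue (kcore w k)))
    \<le> ereal (measure lebesgue (kcore w \<kappa>))"
  unfolding Limsup_le_iff
proof (intro allI impI)
  fix y assume y: "ereal (measure lebesgue (kcore w \<kappa>)) < y"
  show "eventually (\<lambda>k. ereal (measure lebesgue (kcore w k)) < y) (at \<kappa> within S)"
  proof (cases y)
    case (real r)
    then show ?thesis using measure_kcore_eventually_less[of \<kappa> r] y by simp
  qed (use y in simp_all)
qed

lemma Limsup_measure_kcore_eq:
  assumes "0 < \<kappa>" "\<kappa> \<le> 1"
  shows "Limsup (at \<kappa> within {0..1}) (\<lambda>k. ereal (measure lebesgue (kcore w k)))
    = ereal (measure lebesgue (kcore w \<kappa>))"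
proof (rule antisym[OF Limsup_measure_kcore_le])
  have "at_left \<kappa> = at \<kappa> within {0..<\<kappa>}"
    using assms by (intro at_within_nhd[of _ "{0<..}"]) auto
  also have "\<dots> \<le> at \<kappa> within {0..1}"
    using assms by (intro at_le) auto
  finally have "Limsup (at_left \<kappa>) (\<lambda>k. ereal (measure lebesgue (kcore w k)))
      \<le> Limsup (at \<kappa> within {0..1}) (\<lambda>k. ereal (measure lebesgue (kcore w k)))"
    by (rule Limsup_filter_mono)
  moreover have "Limsup (at_left \<kappa>) (\<lambda>k. ereal (measure lebesgue (kcore w k)))
      = ereal (measure lebesgue (kcore w \<kappa>))"
    by (intro lim_imp_Limsup tendsto_ereal measure_kcore_tendsto_left) simp
  ultimately show "ereal (measure lebesgue (kcore w \<kappa>))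
      \<le> Limsup (at \<kappa> within {0..1}) (\<lambda>k. ereal (measure lebesgue (kcore w k)))"
    by simp
qed

end

lemma graphon_AE_eq_unit_kernel:
  assumes "graphon w"
  obtains g where "unit_kernel g"
    and "AE x in lebesgue. AE y in lebesgue. x \<in> {0..1} \<longrightarrow> y \<in> {0..1} \<longrightarrow> w x y = g x y"
proof -
  let ?I = "{0..1::real}"
  have range: "0 \<le> w x y \<and> w x y \<le> 1" if "x \<in> ?I" "y \<in> ?I" for x y
    using assms that unfolding graphon_def by blast
  define f where "f p = indicator (?I \<times> ?I) p * w (fst p) (snd p)" for p :: "real \<times> real"
  have "?I \<times> ?I \<in> sets lebesgue"
    by (intro sets_completionI_sets) (simp add: borel_closed closed_Times)
  moreover have "(\<lambda>(x, y). w x y) \<in> borel_measurable (restrict_space lebesgue (?I \<times> ?I))"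
    using assms unfolding graphon_def by blast
  ultimately have "f \<in> borel_measurable lebesgue"
    unfolding f_def using borel_measurable_restrict_space_iff[of "?I \<times> ?I" lebesgue "\<lambda>(x, y). w x y"]
    by (simp add: case_prod_beta)
  then obtain f' where f': "f' \<in> borel_measurable lborel" "AE p in lborel. f p = f' p"
    using completion_ex_borel_measurable_real by blast
  define g where "g x y = max 0 (min 1 (f' (x, y)))" for x y
  have "(\<lambda>p. max 0 (min 1 (f' p))) \<in> borel_measurable (lborel \<Otimes>\<^sub>M lborel)"
    unfolding lborel_prod using f'(1) by measurable
  then have "unit_kernel g"
    unfolding g_def by unfold_locales (simp_all add: case_prod_beta')
  have "AE p in lborel \<Otimes>\<^sub>M lborel.
      fst p \<in> ?I \<longrightarrow> snd p \<in> ?I \<longrightarrow> w (fst p) (snd p) = g (fst p) (snd p)"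
    unfolding lborel_prod using f'(2)
  proof eventually_elim
    case (elim p)
    show ?case
    proof (intro impI)
      assume "fst p \<in> ?I" "snd p \<in> ?I"
      with elim range[OF this] show "w (fst p) (snd p) = g (fst p) (snd p)"
        by (cases p) (simp add: f_def g_def)
    qed
  qed
  then have "AE x in lborel. AE y in lborel. x \<in> ?I \<longrightarrow> y \<in> ?I \<longrightarrow> w x y = g x y"
    using lborel_pair.AE_pair by fastforce
  then have "AE x in lebesgue. AE y in lebesgue. x \<in> ?I \<longrightarrow> y \<in> ?I \<longrightarrow> w x y = g x y"
    by (rule AE_completion[OF eventually_mono]) (rule AE_completion)
  with \<open>unit_kernel g\<close> show thesis
    by (rule that)
qed

lemma graphon_has_version:
  assumes "graphon w"
  obtains g N where "graphon_version g w N"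
proof -
  obtain g where g: "unit_kernel g"
    and AE_eq: "AE x in lebesgue. AE y in lebesgue. x \<in> {0..1} \<longrightarrow> y \<in> {0..1} \<longrightarrow> w x y = g x y"
    using graphon_AE_eq_unit_kernel[OF assms] .
  then obtain N where N: "N \<in> null_sets lebesgue"
    "{x \<in> space lebesgue.
      \<not> (AE y in lebesgue. x \<in> {0..1} \<longrightarrow> y \<in> {0..1} \<longrightarrow> w x y = g x y)} \<subseteq> N"
    unfolding eventually_ae_filter by blast
  have "graphon_version g w N"
  proof (intro graphon_version.intro graphon_version_axioms.intro g N(1))
    show "0 \<le> w x y \<and> w x y \<le> 1" if "x \<in> {0..1}" "y \<in> {0..1}" for x y
      using assms that unfolding graphon_def by blast
    show "AE y in lebesgue. y \<in> {0..1} \<longrightarrow> w x y = g x y" if "x \<in> {0..1}" "x \<notin> N" for x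
      using N(2) that by auto
  qed
  then show thesis by (rule that)
qed

theorem lemma2:
  fixes w :: "real \<Rightarrow> real \<Rightarrow> real" and \<kappa> :: real
  assumes "graphon w" and "\<kappa> \<in> {0..1}"
  shows "((\<lambda>n. measure lebesgue (kcore_iter w \<kappa> n)) \<longlonglongrightarrow> measure lebesgue (kcore w \<kappa>))
    \<and> (measure lebesgue (kcore w \<kappa>) > 0 \<longrightarrow> measure lebesgue (kcore w \<kappa>) \<ge> \<kappa>)
    \<and> (measure lebesgue (kcore w \<kappa>) = 0 \<longrightarrow>
           kcore w \<kappa> = {} \<and> (\<exists>n\<ge>1. kcore_iter w \<kappa> n = {}))
    \<and> (Limsup (at \<kappa> within {0..1}) (\<lambda>k. ereal (measure lebesgue (kcore w k)))
           \<le> ereal (measure lebesgue (kcore w \<kappa>)))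
    \<and> (\<kappa> > 0 \<longrightarrow>
           ((\<lambda>k. measure lebesgue (kcore w k)) \<longlongrightarrow> measure lebesgue (kcore w \<kappa>)) (at_left \<kappa>) \<and>
           Limsup (at \<kappa> within {0..1}) (\<lambda>k. ereal (measure lebesgue (kcore w k)))
             = ereal (measure lebesgue (kcore w \<kappa>)))"
proof -
  obtain g N where "graphon_version g w N"
    using graphon_has_version[OF assms(1)] .
  then interpret graphon_version g w N .
  have "\<kappa> \<le> 1"
    using assms(2) by simp
  have core_nonempty: "kcore w \<kappa> \<noteq> {}" if "measure lebesgue (kcore w \<kappa>) \<noteq> 0"
    using that by auto
  show ?thesis
    using measure_kcore_iter_tendsto[of \<kappa>] le_measure_kcore[OF core_nonempty]
      measure_kcore_eq_0_imp_empty[of \<kappa>] Limsup_measure_kcore_le[of \<kappa> "{0..1}"]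
      measure_kcore_tendsto_left[of \<kappa>] Limsup_measure_kcore_eq[of \<kappa>] \<open>\<kappa> \<le> 1\<close>
    by (auto simp del: kcore_iter.simps)
qed

end
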